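(* Let $a,b$ be positive integers and $c,d$ nonnegative integers. For $n\ge0$ let $$P_n(x)=\sum_{k=0}^{n}\frac{(q^{-n},q^{n+a+b+c+d-1};q)_k\,(q^a(1+(q-1)x);q)_k\,q^k}{(q,q^{a+c},q^{a+d};q)_k},$$ i.e. ${}_3\phi_2\!\left(q^{-n},q^{n+a+b+c+d-1},q^a(1+(q-1)x);q^{a+c},q^{a+d};q,q\right)$. Let $W(x)=\operatorname{Asc}(x,a-1)\operatorname{Asc}(x,b-1)\operatorname{Desc}(x,c-1)\operatorname{Desc}(x,d-1)$ and $C_{a,b,c,d}=\Psi(x^2W(x))$. Then the numbers $\Psi(x^{n+2}W(x))/C_{a,b,c,d}$, $n\ge0$, are the moments of the orthogonal polynomials $(P_n)_{n\ge0}$.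
   Context: $q$ is an indeterminate; work over $\mathbb{Q}(q)$. The $q$-Bernoulli–Carlitz numbers $\beta_n$ are defined by: for all $n\ge0$, $q\sum_{k=0}^{n}\binom{n}{k}q^k\beta_k-\beta_n$ equals $q-1$ if $n=0$, $1$ if $n=1$, $0$ if $n>1$. $\Psi$ is the linear form on $\mathbb{Q}(q)[x]$ with $\Psi(x^n)=\beta_n$. $[m]_q=(q^m-1)/(q-1)$. $\operatorname{Asc}(x,0)=1$ and $\operatorname{Asc}(x,a)=\prod_{i=1}^a([i]_q+q^ix)$ for $a\ge1$; $\operatorname{Desc}(x,-1)=-1/x$, $\operatorname{Desc}(x,0)=1$, $\operatorname{Desc}(x,a)=\prod_{i=1}^a([i]_q-x)$ for $a\ge1$ (so $x^2W(x)$ is a polynomial). $(a;q)_k=(1-a)(1-qa)\cdots(1-q^{k-1}a)$, $(a_1,\dots,a_r;q)_k=\prod_i(a_i;q)_k$. A sequence $(m_n)$ with $m_0=1$ is the sequence of moments of $(P_n)$ ($\deg P_n=n$) if the linear functional $L$ with $L(x^n)=m_n$ satisfies $L(P_mP_n)=0$ for $m\ne n$ and $L(P_n^2)\ne0$. *)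

theory Defs
  imports "HOL-Computational_Algebra.Polynomial" "HOL-Computational_Algebra.Fraction_Field"
begin

type_synonym Qq = "rat poly fract"

definition qq :: Qq where "qq = Fract [:0, 1:] 1"

definition qint :: "nat \<Rightarrow> Qq" where "qint m = (qq ^ m - 1) / (qq - 1)"

text \<open>Right-hand side of the defining relation of the Bernoulli-Carlitz numbers.\<close>
definition beta_rhs :: "nat \<Rightarrow> Qq" where
  "beta_rhs n = (if n = 0 then qq - 1 else if n = 1 then 1 else 0)"

text \<open>beta n solved from  q * sum_{k<=n} binom(n,k) q^k beta_k - beta_n = rhs(n):
  (q^(n+1) - 1) beta_n = rhs(n) - q * sum_{k<n} binom(n,k) q^k beta_k.\<close>
function beta :: "nat \<Rightarrow> Qq" where
  "beta n = (beta_rhs n - qq * (\<Sum>k\<in>{k. k < n}. of_nat (n choose k) * qq ^ k * beta k))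
             / (qq ^ (n + 1) - 1)"
  by auto
termination by (relation "measure id") auto

definition Psi :: "Qq poly \<Rightarrow> Qq" where
  "Psi p = (\<Sum>i\<le>degree p. coeff p i * beta i)"

definition Asc :: "nat \<Rightarrow> Qq poly" where
  "Asc a = (\<Prod>i=1..a. [:qint i, qq ^ i:])"

definition Desc :: "nat \<Rightarrow> Qq poly" where
  "Desc a = (\<Prod>i=1..a. [:qint i, -1:])"

text \<open>xDesc c = x * Desc(x, c-1), a polynomial also for c = 0 (Desc(x,-1) = -1/x).\<close>
definition xDesc :: "nat \<Rightarrow> Qq poly" where
  "xDesc c = (if c = 0 then [:-1:] else [:0, 1:] * Desc (c - 1))"

definition x2W :: "nat \<Rightarrow> nat \<Rightarrow> nat \<Rightarrow> nat \<Rightarrow> Qq poly" where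
  "x2W a b c d = Asc (a - 1) * Asc (b - 1) * xDesc c * xDesc d"

definition qpoch :: "Qq \<Rightarrow> nat \<Rightarrow> Qq" where
  "qpoch y k = (\<Prod>j<k. 1 - qq ^ j * y)"

definition qpoch_poly :: "Qq poly \<Rightarrow> nat \<Rightarrow> Qq poly" where
  "qpoch_poly y k = (\<Prod>j<k. 1 - smult (qq ^ j) y)"

definition Pn :: "nat \<Rightarrow> nat \<Rightarrow> nat \<Rightarrow> nat \<Rightarrow> nat \<Rightarrow> Qq poly" where
  "Pn a b c d n = (\<Sum>k\<le>n.
     smult (qpoch (inverse qq ^ n) k * qpoch (qq ^ (n + a + b + c + d - 1)) k * qq ^ k
            / (qpoch qq k * qpoch (qq ^ (a + c)) k * qpoch (qq ^ (a + d)) k))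
       (qpoch_poly [:qq ^ a, qq ^ a * (qq - 1):] k))"

definition mom_functional :: "(nat \<Rightarrow> Qq) \<Rightarrow> Qq poly \<Rightarrow> Qq" where
  "mom_functional m p = (\<Sum>i\<le>degree p. coeff p i * m i)"

definition is_moments_of :: "(nat \<Rightarrow> Qq) \<Rightarrow> (nat \<Rightarrow> Qq poly) \<Rightarrow> bool" where
  "is_moments_of m P \<longleftrightarrow> m 0 = 1 \<and> (\<forall>n. degree (P n) = n \<and> P n \<noteq> 0) \<and>
     (\<forall>i j. i \<noteq> j \<longrightarrow> mom_functional m (P i * P j) = 0) \<and>
     (\<forall>n. mom_functional m (P n * P n) \<noteq> 0)"

end

theory Submission
  imports Defs
begin

text \<open>In the variable y = 1 + (q - 1) x the functional Psi becomes the functional with moments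
  (n + 1)(q - 1) / (q^(n+1) - 1), which is characterised by the q-shift relation
  L(q h(q y) - h(y)) = (q - 1)(h(1) + h'(1)).  Up to a constant, x^2 W(x) becomes
  (q y; q)_(a-1) (q y; q)_(b-1) times the products of the q^i - y for i < c and for i < d.
  The shift relation yields recurrences for the moments of such weights which are solved by a
  closed q-beta product, first for c = d = 0 and then by a contiguous relation in c and d.
  The polynomial P_n is a combination of the (q^a y; q)_k, so pairing it with (q^b y; q)_j
  gives a terminating sum that the q-Chu-Vandermonde identity evaluates to a product; this
  product vanishes for j < n and not for j = n, which is orthogonality.\<close>

declare beta.simps [simp del]

lemma qq_power: "qq ^ n = Fract (monom 1 n) 1"
  by (induction n) (simp_all add: qq_def monom_Suc One_fract_def monom_0 flip: one_pCons)

lemma qq_power_eq_iff [simp]: "qq ^ m = qq ^ n \<longleftrightarrow> m = n"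
proof
  assume "qq ^ m = qq ^ n"
  hence "monom (1::rat) m = monom 1 n" by (simp add: qq_power eq_fract)
  hence "coeff (monom (1::rat) m) m = coeff (monom 1 n) m" by simp
  thus "m = n" by (simp split: if_splits)
qed simp

lemma qq_power_eq_1_iff [simp]: "qq ^ m = 1 \<longleftrightarrow> m = 0"
  using qq_power_eq_iff[of m 0] by simp

lemma qq_ne_0 [simp]: "qq \<noteq> 0"
  by (simp add: qq_def Zero_fract_def eq_fract)

lemma qq_ne_1 [simp]: "qq \<noteq> 1"
  using qq_power_eq_1_iff[of 1] by simp

lemma one_minus_qq_power_ne_0: "n > 0 \<Longrightarrow> 1 - qq ^ n \<noteq> 0"
  by simp

lemma qq_times_power_ne_1 [simp]: "qq * qq ^ n \<noteq> 1"
  using qq_power_eq_1_iff[of "Suc n"] by (simp del: qq_power_eq_1_iff)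

lemma mom_functional_eq_sum:
  "degree p \<le> N \<Longrightarrow> mom_functional m p = (\<Sum>i\<le>N. coeff p i * m i)"
  unfolding mom_functional_def by (rule sum.mono_neutral_left) (auto simp: coeff_eq_0)

lemma mom_functional_0 [simp]: "mom_functional m 0 = 0"
  by (simp add: mom_functional_def)

lemma mom_functional_add:
  "mom_functional m (p + r) = mom_functional m p + mom_functional m r"
proof -
  define N where "N = max (degree p) (degree r)"
  have "degree (p + r) \<le> N" by (simp add: N_def degree_add_le)
  thus ?thesis
    using mom_functional_eq_sum[of p N m] mom_functional_eq_sum[of r N m]
      mom_functional_eq_sum[of "p + r" N m]
    by (simp add: N_def sum.distrib distrib_right)
qed

lemma mom_functional_smult: "mom_functional m (smult c p) = c * mom_functional m p"
  using mom_functional_eq_sum[of "smult c p" "degree p" m] mom_functional_eq_sum[of p "degree p" m]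
  by (simp add: sum_distrib_left mult_ac)

lemma mom_functional_diff:
  "mom_functional m (p - r) = mom_functional m p - mom_functional m r"
  using mom_functional_add[of m p "- r"] mom_functional_smult[of m "- 1" r] by simp

lemma mom_functional_sum:
  "mom_functional m (\<Sum>i\<in>A. f i) = (\<Sum>i\<in>A. mom_functional m (f i))"
  by (induction A rule: infinite_finite_induct) (auto simp: mom_functional_add)

lemma mom_functional_monom: "mom_functional m (monom c n) = c * m n"
proof -
  have "(\<Sum>i\<le>n. coeff (monom c n) i * m i) = (\<Sum>i\<le>n. if i = n then c * m i else 0)"
    by (rule sum.cong) (auto simp: coeff_monom)
  thus ?thesis using mom_functional_eq_sum[of "monom c n" n m] by (simp add: degree_monom_le)
qed

lemma mom_functional_1: "mom_functional m 1 = m 0"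
  using mom_functional_monom[of m 1 0] by (simp add: monom_0 flip: one_pCons)

lemma Psi_eq_mom_functional: "Psi = mom_functional beta"
  by (simp add: fun_eq_iff Psi_def mom_functional_def)

lemma pcompose_monom: "pcompose (monom c n) r = smult c (r ^ n)"
  by (induction n) (simp_all add: monom_0 monom_Suc pcompose_pCons mult_ac)

lemma pcompose_eq_sum: "pcompose p r = (\<Sum>i\<le>degree p. smult (coeff p i) (r ^ i))"
proof -
  have "pcompose p r = pcompose (\<Sum>i\<le>degree p. monom (coeff p i) i) r"
    by (simp add: poly_as_sum_of_monoms)
  also have "\<dots> = (\<Sum>i\<le>degree p. smult (coeff p i) (r ^ i))"
    by (simp add: pcompose_sum pcompose_monom)
  finally show ?thesis .
qed

lemma mom_functional_pcompose:
  "mom_functional m (pcompose p r) = mom_functional (\<lambda>n. mom_functional m (r ^ n)) p"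
proof -
  have "mom_functional m (pcompose p r) = (\<Sum>i\<le>degree p. coeff p i * mom_functional m (r ^ i))"
    by (simp add: pcompose_eq_sum mom_functional_sum mom_functional_smult)
  thus ?thesis by (simp add: mom_functional_def[of "\<lambda>n. mom_functional m (r ^ n)"])
qed

lemma mom_functional_mult_weight:
  "mom_functional (\<lambda>n. mom_functional m ([:0, 1:] ^ n * w) / C) p = mom_functional m (p * w) / C"
proof -
  have "p * w = (\<Sum>i\<le>degree p. smult (coeff p i) ([:0, 1:] ^ i * w))"
    by (subst (1) poly_as_sum_of_monoms[symmetric]) (simp add: monom_altdef sum_distrib_right)
  hence "mom_functional m (p * w) / C
      = (\<Sum>i\<le>degree p. coeff p i * (mom_functional m ([:0, 1:] ^ i * w) / C))"
    by (simp add: mom_functional_sum mom_functional_smult sum_divide_distrib)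
  thus ?thesis by (simp add: mom_functional_def[of "\<lambda>n. mom_functional m ([:0, 1:] ^ n * w) / C"])
qed

section \<open>The q-shift relation and the variable y\<close>

lemma beta_recurrence:
  "qq * (\<Sum>k\<le>n. of_nat (n choose k) * qq ^ k * beta k) - beta n = beta_rhs n"
proof -
  have ne: "qq ^ (n + 1) - 1 \<noteq> 0" by simp
  have "{k. k < n} = {..<n}" by auto
  hence "beta n = (beta_rhs n - qq * (\<Sum>k<n. of_nat (n choose k) * qq ^ k * beta k))
                  / (qq ^ (n + 1) - 1)"
    by (subst beta.simps) simp
  hence "beta n * (qq ^ (n + 1) - 1)
       = beta_rhs n - qq * (\<Sum>k<n. of_nat (n choose k) * qq ^ k * beta k)"
    using ne by (simp add: field_simps)
  thus ?thesis by (simp add: lessThan_Suc_atMost[symmetric] algebra_simps)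
qed

lemma Psi_shift:
  "qq * Psi (pcompose p [:1, qq:]) - Psi p = (qq - 1) * coeff p 0 + coeff p 1"
proof -
  have shift_power: "mom_functional beta ([:1, qq:] ^ n) = (\<Sum>k\<le>n. of_nat (n choose k) * qq ^ k * beta k)"
    for n
  proof -
    have "degree ([:1, qq:] ^ n) \<le> n" using degree_power_le[of "[:1, qq:]" n] by simp
    thus ?thesis by (simp add: mom_functional_eq_sum coeff_linear_poly_power)
  qed
  have "Psi (pcompose p [:1, qq:])
      = (\<Sum>i\<le>degree p. coeff p i * (\<Sum>k\<le>i. of_nat (i choose k) * qq ^ k * beta k))"
    unfolding Psi_eq_mom_functional mom_functional_pcompose shift_power
    by (simp add: mom_functional_def)
  hence "qq * Psi (pcompose p [:1, qq:]) - Psi p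
      = (\<Sum>i\<le>degree p. coeff p i * (qq * (\<Sum>k\<le>i. of_nat (i choose k) * qq ^ k * beta k) - beta i))"
    by (simp add: Psi_def sum_distrib_left sum_subtractf algebra_simps)
  also have "\<dots> = (\<Sum>i\<le>degree p. coeff p i * beta_rhs i)"
    by (simp only: beta_recurrence)
  also have "\<dots> = (\<Sum>i\<in>{0, 1}. coeff p i * beta_rhs i)"
    by (rule sum.mono_neutral_cong) (auto simp: beta_rhs_def coeff_eq_0)
  finally show ?thesis by (simp add: beta_rhs_def)
qed

definition yvar :: "Qq poly" where "yvar = [:1, qq - 1:]"

definition ymoment :: "nat \<Rightarrow> Qq" where
  "ymoment n = of_nat (n + 1) * (qq - 1) / (qq ^ (n + 1) - 1)"

abbreviation Psi_y :: "Qq poly \<Rightarrow> Qq" where "Psi_y \<equiv> mom_functional ymoment"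

lemma ymoment_0: "ymoment 0 = 1"
  by (simp add: ymoment_def)

lemma pcompose_power: "pcompose (p ^ n) r = pcompose p r ^ n"
  by (induction n) (simp_all add: pcompose_1 pcompose_mult)

lemma Psi_yvar_power: "Psi (yvar ^ n) = ymoment n"
proof -
  have yvar_shift: "pcompose yvar [:1, qq:] = smult qq yvar"
    by (simp add: yvar_def pcompose_pCons algebra_simps)
  have coeff0: "coeff (yvar ^ n) 0 = 1" by (simp add: yvar_def coeff_linear_poly_power)
  have coeff1: "coeff (yvar ^ n) (Suc 0) = of_nat n * (qq - 1)"
    using coeff_linear_poly_power[of 1 n 1 "qq - 1"] by (cases n) (simp_all add: yvar_def)
  have "qq * Psi (smult (qq ^ n) (yvar ^ n)) - Psi (yvar ^ n) = (qq - 1) + of_nat n * (qq - 1)"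
    using Psi_shift[of "yvar ^ n"] by (simp add: pcompose_power yvar_shift coeff0 coeff1 smult_power)
  hence "(qq ^ (n + 1) - 1) * Psi (yvar ^ n) = of_nat (n + 1) * (qq - 1)"
    by (simp add: Psi_eq_mom_functional mom_functional_smult algebra_simps)
  moreover have "qq ^ (n + 1) - 1 \<noteq> 0" by simp
  ultimately show ?thesis by (simp add: ymoment_def field_simps)
qed

lemma Psi_pcompose_yvar: "Psi (pcompose p yvar) = Psi_y p"
proof -
  have "(\<lambda>n. mom_functional beta (yvar ^ n)) = ymoment"
    using Psi_yvar_power by (simp add: Psi_eq_mom_functional fun_eq_iff)
  thus ?thesis by (simp add: Psi_eq_mom_functional mom_functional_pcompose)
qed

lemma smult_sum_right: "smult c (\<Sum>i\<in>A. f i) = (\<Sum>i\<in>A. smult c (f i))"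
  by (induction A rule: infinite_finite_induct) (auto simp: smult_add_right)

lemma pderiv_sum: "pderiv (\<Sum>i\<in>A. f i) = (\<Sum>i\<in>A. pderiv (f i))"
  by (induction A rule: infinite_finite_induct) (auto simp: pderiv_add)

lemma Psi_y_shift:
  "Psi_y (smult qq (pcompose h [:0, qq:]) - h) = (qq - 1) * (poly h 1 + poly (pderiv h) 1)"
proof -
  have monom_case: "Psi_y (smult qq (pcompose (monom c n) [:0, qq:]) - monom c n)
      = (qq - 1) * (poly (monom c n) 1 + poly (pderiv (monom c n)) 1)" for c n
  proof -
    have "[:0, qq:] ^ n = monom (qq ^ n) n"
      using monom_power[of qq 1 n] by (simp add: monom_Suc monom_0)
    hence "smult qq (pcompose (monom c n) [:0, qq:]) - monom c n = monom ((qq ^ (n + 1) - 1) * c) n"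
      by (simp add: pcompose_monom smult_monom algebra_simps diff_monom)
    moreover have "qq ^ (n + 1) - 1 \<noteq> 0" by simp
    ultimately show ?thesis
      by (cases n) (simp_all add: mom_functional_monom ymoment_def pderiv_monom poly_monom field_simps)
  qed
  define N where "N = degree h"
  have h: "h = (\<Sum>i\<le>N. monom (coeff h i) i)" by (simp add: N_def poly_as_sum_of_monoms)
  have "smult qq (pcompose h [:0, qq:]) - h
     = (\<Sum>i\<le>N. smult qq (pcompose (monom (coeff h i) i) [:0, qq:]) - monom (coeff h i) i)"
    by (subst (1 2) h) (simp add: pcompose_sum smult_sum_right sum_subtractf)
  hence "Psi_y (smult qq (pcompose h [:0, qq:]) - h)
     = (\<Sum>i\<le>N. (qq - 1) * (poly (monom (coeff h i) i) 1 + poly (pderiv (monom (coeff h i) i)) 1))"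
    by (simp add: mom_functional_sum monom_case)
  also have "\<dots> = (qq - 1) * (poly h 1 + poly (pderiv h) 1)"
    by (subst (3 4) h) (simp add: sum_distrib_left poly_sum pderiv_sum sum.distrib distrib_left)
  finally show ?thesis .
qed

section \<open>The q-beta integral\<close>

lemma qpoch_0 [simp]: "qpoch z 0 = 1"
  by (simp add: qpoch_def)

lemma qpoch_Suc: "qpoch z (Suc k) = qpoch z k * (1 - qq ^ k * z)"
  by (simp add: qpoch_def)

lemma qpoch_add: "qpoch z (m + k) = qpoch z m * qpoch (qq ^ m * z) k"
  by (induction k) (simp_all add: qpoch_Suc power_add mult_ac)

lemma qpoch_qq_add: "qpoch qq (m + k) = qpoch qq m * qpoch (qq ^ (m + 1)) k"
  using qpoch_add[of qq m k] by (simp only: power_Suc2[symmetric] Suc_eq_plus1)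

lemma qpoch_qq_Suc: "qpoch qq (Suc k) = qpoch qq k * (1 - qq ^ (k + 1))"
  by (simp add: qpoch_Suc)

lemma qpoch_qq_power_ne_0: "m > 0 \<Longrightarrow> qpoch (qq ^ m) k \<noteq> 0"
  by (simp add: qpoch_def flip: power_add)

lemma qpoch_qq_ne_0: "qpoch qq k \<noteq> 0"
  using qpoch_qq_power_ne_0[of 1 k] by simp

text \<open>In the variable y: ypoch s k is (q^(s+1) y; q)_k, ydesc c is the product of the q^i - y
  for i < c, and yweight a b c d corresponds to x^2 W(x) with a, b shifted by one.\<close>

definition ypoch :: "nat \<Rightarrow> nat \<Rightarrow> Qq poly" where
  "ypoch s k = (\<Prod>j<k. [:1, - (qq ^ (s + j + 1)):])"

definition ydesc :: "nat \<Rightarrow> Qq poly" where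
  "ydesc c = (\<Prod>i<c. [:qq ^ i, -1:])"

definition yweight :: "nat \<Rightarrow> nat \<Rightarrow> nat \<Rightarrow> nat \<Rightarrow> Qq poly" where
  "yweight a b c d = ypoch 0 a * ypoch 0 b * ydesc c * ydesc d"

definition qbeta :: "nat \<Rightarrow> nat \<Rightarrow> nat \<Rightarrow> nat \<Rightarrow> Qq" where
  "qbeta a b c d = (-1) ^ (c + d) * (1 - qq) * qq ^ (c * d)
     * qpoch qq (a + c) * qpoch qq (a + d) * qpoch qq (b + c) * qpoch qq (b + d)
     / qpoch qq (a + b + c + d + 1)"

lemma ypoch_0 [simp]: "ypoch s 0 = 1"
  by (simp add: ypoch_def)

lemma ypoch_Suc: "ypoch s (Suc k) = ypoch s k * [:1, - (qq ^ (s + k + 1)):]"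
  by (simp add: ypoch_def)

lemmas ypoch_0_Suc = ypoch_Suc[of 0, unfolded add_0]

lemma ypoch_add: "ypoch s a * ypoch (s + a) k = ypoch s (a + k)"
proof (induction k)
  case (Suc k)
  have "ypoch s a * ypoch (s + a) (Suc k) = (ypoch s a * ypoch (s + a) k) * [:1, - (qq ^ (s + (a + k) + 1)):]"
    by (simp only: ypoch_Suc mult.assoc add.assoc)
  thus ?case by (simp only: Suc ypoch_Suc add_Suc_right)
qed simp

lemma ydesc_0 [simp]: "ydesc 0 = 1"
  by (simp add: ydesc_def)

lemma ydesc_Suc: "ydesc (Suc c) = ydesc c * [:qq ^ c, -1:]"
  by (simp add: ydesc_def)

lemma yweight_swap: "yweight a b c d = yweight b a d c"
  by (simp add: yweight_def mult_ac)

lemma qbeta_swap: "qbeta a b c d = qbeta b a d c"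
  by (simp add: qbeta_def mult_ac add_ac)

lemma qbeta_ne_0: "qbeta a b c d \<noteq> 0"
  by (simp add: qbeta_def qpoch_qq_ne_0)

lemma pcompose_linear_scale: "pcompose [:u, v:] [:0, c:] = [:u, v * c:]"
  by (simp add: pcompose_pCons)

lemma pcompose_ypoch_scale: "pcompose (ypoch s k) [:0, qq:] = ypoch (Suc s) k"
  by (simp add: ypoch_def pcompose_prod pcompose_linear_scale mult.commute)

lemma ypoch_Suc_left: "ypoch s (Suc k) = [:1, - (qq ^ (s + 1)):] * ypoch (Suc s) k"
  unfolding ypoch_def prod.lessThan_Suc_shift by simp

lemma ypoch_0_shift: "[:1, - qq:] * pcompose (ypoch 0 k) [:0, qq:] = ypoch 0 (Suc k)"
  by (simp add: pcompose_ypoch_scale ypoch_Suc_left)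

lemma poly_ypoch_0_1: "poly (ypoch 0 k) 1 = qpoch qq k"
  by (simp add: ypoch_def qpoch_def poly_prod mult.commute)

lemma Psi_y_ypoch_recurrence:
  "qq * Psi_y (ypoch 0 (Suc k))
     - inverse (qq ^ (k + 1)) * (Psi_y (ypoch 0 (Suc k)) - (1 - qq ^ (k + 1)) * Psi_y (ypoch 0 k))
   = - (qq - 1) * qpoch qq k"
proof -
  define h where "h = [:1, -1:] * ypoch 0 k"
  have h_eq: "h = smult (inverse (qq ^ (k + 1))) (ypoch 0 (Suc k) - smult (1 - qq ^ (k + 1)) (ypoch 0 k))"
    unfolding h_def ypoch_0_Suc by (rule poly_ext) (simp add: field_simps)
  have h_shift: "pcompose h [:0, qq:] = ypoch 0 (Suc k)"
    by (simp only: h_def pcompose_mult pcompose_pCons ypoch_0_shift[symmetric])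
       (simp add: pcompose_pCons)
  have "poly h 1 = 0" by (simp add: h_def)
  moreover have "poly (pderiv h) 1 = - qpoch qq k"
    by (simp only: h_def pderiv_mult) (simp add: pderiv_pCons poly_ypoch_0_1)
  ultimately have "Psi_y (smult qq (ypoch 0 (Suc k)) - h) = - (qq - 1) * qpoch qq k"
    using Psi_y_shift[of h] by (simp add: h_shift algebra_simps)
  thus ?thesis unfolding h_eq by (simp add: mom_functional_diff mom_functional_smult)
qed

lemma Psi_y_ypoch: "Psi_y (ypoch 0 k) = (1 - qq) * qpoch qq k / (1 - qq ^ (k + 1))"
proof (induction k)
  case 0 thus ?case by (simp add: mom_functional_1 ymoment_0)
next
  case (Suc k)
  define X where "X = Psi_y (ypoch 0 (Suc k))"
  define P where "P = qq ^ (k + 1)"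
  have P_ne_0: "P \<noteq> 0" and one_minus_P: "1 - P \<noteq> 0" by (simp_all add: P_def)
  have one_minus_qqP: "1 - qq * P \<noteq> 0"
    using qq_power_eq_1_iff[of "k + 2"] by (simp add: P_def del: qq_power_eq_1_iff)
  have IH: "Psi_y (ypoch 0 k) = (1 - qq) * qpoch qq k / (1 - P)" using Suc by (simp add: P_def)
  have "(1 - P) * Psi_y (ypoch 0 k) = (1 - qq) * qpoch qq k"
    using one_minus_P by (simp add: IH)
  moreover have "qq * X - inverse P * (X - (1 - P) * Psi_y (ypoch 0 k)) = - (qq - 1) * qpoch qq k"
    using Psi_y_ypoch_recurrence[of k] by (simp only: X_def P_def)
  ultimately have "qq * X - inverse P * (X - (1 - qq) * qpoch qq k) = - (qq - 1) * qpoch qq k"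
    by simp
  hence "X * (qq * P - 1) = (1 - qq) * qpoch qq k * (P - 1)"
    using P_ne_0 by (simp add: field_simps)
  hence "X = (1 - qq) * (qpoch qq k * (1 - P)) / (1 - qq * P)"
    using one_minus_qqP by (simp add: field_simps)
  thus ?case by (simp add: X_def qpoch_qq_Suc P_def)
qed

lemma Psi_y_ypoch_ypoch_recurrence:
  "(qq * qq ^ (a + 1) * qq ^ (b + 1) - 1) * Psi_y (ypoch 0 (Suc a) * ypoch 0 (Suc b))
    = - (1 - qq ^ (b + 1)) * Psi_y (ypoch 0 (Suc a) * ypoch 0 b)
      - (1 - qq ^ (a + 1)) * Psi_y (ypoch 0 a * ypoch 0 (Suc b))
      + (1 - qq ^ (a + 1)) * (1 - qq ^ (b + 1)) * Psi_y (ypoch 0 a * ypoch 0 b)"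
proof -
  define A where "A = qq ^ (a + 1)"
  define B where "B = qq ^ (b + 1)"
  define h where "h = ypoch 0 a * ypoch 0 b * [:1, -1:] * [:1, -1:]"
  have h_eq: "h = smult (inverse (A * B))
     (ypoch 0 (Suc a) * ypoch 0 (Suc b) - smult (1 - B) (ypoch 0 (Suc a) * ypoch 0 b)
      - smult (1 - A) (ypoch 0 a * ypoch 0 (Suc b))
      + smult ((1 - A) * (1 - B)) (ypoch 0 a * ypoch 0 b))"
    unfolding h_def A_def B_def ypoch_0_Suc by (rule poly_ext) (simp add: field_simps)
  have "pcompose h [:0, qq:]
      = ([:1, -qq:] * pcompose (ypoch 0 a) [:0, qq:]) * ([:1, -qq:] * pcompose (ypoch 0 b) [:0, qq:])"
    by (simp only: h_def pcompose_mult pcompose_linear_scale mult_minus_left mult_1_left mult_ac) simp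
  hence h_shift: "pcompose h [:0, qq:] = ypoch 0 (Suc a) * ypoch 0 (Suc b)"
    by (simp only: ypoch_0_shift)
  have "poly h 1 = 0" "poly (pderiv h) 1 = 0"
    by (simp_all only: h_def pderiv_mult) (simp_all add: pderiv_pCons)
  hence "Psi_y (smult qq (ypoch 0 (Suc a) * ypoch 0 (Suc b)) - h) = 0"
    using Psi_y_shift[of h] by (simp add: h_shift)
  hence "qq * Psi_y (ypoch 0 (Suc a) * ypoch 0 (Suc b)) = inverse (A * B)
      * (Psi_y (ypoch 0 (Suc a) * ypoch 0 (Suc b)) - (1 - B) * Psi_y (ypoch 0 (Suc a) * ypoch 0 b)
         - (1 - A) * Psi_y (ypoch 0 a * ypoch 0 (Suc b)) + (1 - A) * (1 - B) * Psi_y (ypoch 0 a * ypoch 0 b))"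
    unfolding h_eq by (simp add: mom_functional_diff mom_functional_add mom_functional_smult)
  moreover have "A * B \<noteq> 0" by (simp add: A_def B_def)
  ultimately have "A * B * (qq * Psi_y (ypoch 0 (Suc a) * ypoch 0 (Suc b)))
      = Psi_y (ypoch 0 (Suc a) * ypoch 0 (Suc b)) - (1 - B) * Psi_y (ypoch 0 (Suc a) * ypoch 0 b)
        - (1 - A) * Psi_y (ypoch 0 a * ypoch 0 (Suc b)) + (1 - A) * (1 - B) * Psi_y (ypoch 0 a * ypoch 0 b)"
    by (simp add: field_simps)
  thus ?thesis unfolding A_def B_def by (simp add: algebra_simps)
qed

lemma qbeta_00: "qbeta a b 0 0 = (1 - qq) * qpoch qq a ^ 2 * qpoch qq b ^ 2 / qpoch qq (a + b + 1)"
  by (simp add: qbeta_def power2_eq_square mult_ac)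

lemma qbeta_00_Suc:
  "qbeta (Suc a) b 0 0 = qbeta a b 0 0 * (1 - qq ^ (a + 1)) ^ 2 / (1 - qq ^ (a + b + 2))"
proof -
  define u where "u = 1 - qq ^ (a + 1)"
  define E where "E = 1 - qq ^ (a + b + 2)"
  have "E \<noteq> 0" unfolding E_def by (rule one_minus_qq_power_ne_0) simp
  moreover have "qpoch qq (Suc a) = qpoch qq a * u"
    and "qpoch qq (Suc a + b + 1) = qpoch qq (a + b + 1) * E"
    using qpoch_qq_Suc[of a] qpoch_qq_Suc[of "a + b + 1"] by (simp_all add: u_def E_def)
  ultimately show ?thesis
    using qpoch_qq_ne_0[of "a + b + 1"] unfolding qbeta_00 u_def[symmetric] E_def[symmetric]
    by (simp add: power_mult_distrib field_simps)
qed

lemma qbeta_00_recurrence: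
  "(qq * qq ^ (a + 1) * qq ^ (b + 1) - 1) * qbeta (Suc a) (Suc b) 0 0
    = - (1 - qq ^ (b + 1)) * qbeta (Suc a) b 0 0 - (1 - qq ^ (a + 1)) * qbeta a (Suc b) 0 0
      + (1 - qq ^ (a + 1)) * (1 - qq ^ (b + 1)) * qbeta a b 0 0"
proof -
  define A where "A = qq ^ (a + 1)"
  define B where "B = qq ^ (b + 1)"
  define E where "E = 1 - A * B"
  define D where "D = 1 - qq * (A * B)"
  define X where "X = qbeta a b 0 0"
  have E_eq: "1 - qq ^ (a + b + 2) = E" "1 - qq ^ (b + a + 2) = E"
    by (simp_all add: E_def A_def B_def power_add algebra_simps)
  have D_eq: "1 - qq ^ (a + Suc b + 2) = D"
    by (simp add: D_def A_def B_def power_add algebra_simps)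
  have E: "E \<noteq> 0" unfolding E_eq(1)[symmetric] by (rule one_minus_qq_power_ne_0) simp
  have D: "D \<noteq> 0" unfolding D_eq[symmetric] by (rule one_minus_qq_power_ne_0) simp
  have S0: "qbeta (Suc a) b 0 0 = X * (1 - A) ^ 2 / E"
    by (simp only: qbeta_00_Suc E_eq X_def A_def)
  have S1: "qbeta a (Suc b) 0 0 = X * (1 - B) ^ 2 / E"
    using qbeta_swap[of a "Suc b" 0 0] qbeta_00_Suc[of b a] qbeta_swap[of b a 0 0]
    by (simp only: E_eq X_def B_def)
  have SS: "qbeta (Suc a) (Suc b) 0 0 = X * (1 - B) ^ 2 / E * (1 - A) ^ 2 / D"
    by (simp only: qbeta_00_Suc S1 D_eq A_def)
  have minus_D: "qq * A * B - 1 = - D" by (simp add: D_def algebra_simps)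
  have "(qq * A * B - 1) * qbeta (Suc a) (Suc b) 0 0 = - (X * (1 - A) ^ 2 * (1 - B) ^ 2 / E)"
    using D unfolding SS minus_D by (simp add: field_simps)
  also have "\<dots> = X * (1 - A) * (1 - B) * (E - (1 - A) - (1 - B)) / E"
  proof -
    have "X * (1 - A) * (1 - B) * (E - (1 - A) - (1 - B)) = - (X * (1 - A) ^ 2 * (1 - B) ^ 2)"
      by (simp add: E_def power2_eq_square algebra_simps)
    thus ?thesis by (simp only: minus_divide_left)
  qed
  also have "\<dots> = - (1 - B) * qbeta (Suc a) b 0 0 - (1 - A) * qbeta a (Suc b) 0 0
      + (1 - A) * (1 - B) * qbeta a b 0 0"
    using E unfolding S0 S1 X_def[symmetric] by (simp add: field_simps power2_eq_square)
  finally show ?thesis by (simp only: A_def B_def)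
qed

lemma Psi_y_ypoch_ypoch: "Psi_y (ypoch 0 a * ypoch 0 b) = qbeta a b 0 0"
proof (induction b arbitrary: a)
  have base: "Psi_y (ypoch 0 a) = qbeta a 0 0 0" for a
    by (simp add: Psi_y_ypoch qbeta_00 qpoch_qq_Suc power2_eq_square qpoch_qq_ne_0 field_simps)
  case 0 show ?case using base by simp
  case (Suc b)
  show ?case
  proof (induction a)
    case 0 show ?case using base[of "Suc b"] by (simp add: qbeta_swap[of 0])
  next
    case (Suc a)
    have "qq * qq ^ (a + 1) * qq ^ (b + 1) = qq ^ (a + b + 3)"
      by (simp add: power_add power3_eq_cube algebra_simps)
    hence "qq * qq ^ (a + 1) * qq ^ (b + 1) - 1 \<noteq> 0"
      using one_minus_qq_power_ne_0[of "a + b + 3"] by (simp only:) (simp add: right_minus_eq)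
    thus ?case
      using Psi_y_ypoch_ypoch_recurrence[of a b] qbeta_00_recurrence[of a b] Suc.IH
        \<open>\<And>a. Psi_y (ypoch 0 a * ypoch 0 b) = qbeta a b 0 0\<close>
      by (metis mult_cancel_left)
  qed
qed

lemma yweight_contiguous:
  "yweight (Suc a) b c d - smult (qq ^ (a + 1)) (yweight a b (Suc c) d)
     = smult (1 - qq ^ (a + 1 + c)) (yweight a b c d)"
  unfolding yweight_def ypoch_0_Suc ydesc_Suc
  by (rule poly_ext) (simp add: algebra_simps power_add)

lemma Psi_y_yweight_contiguous:
  "Psi_y (yweight a b (Suc c) d) * qq ^ (a + 1)
     = Psi_y (yweight (Suc a) b c d) - (1 - qq ^ (a + 1 + c)) * Psi_y (yweight a b c d)"
  using arg_cong[OF yweight_contiguous, of Psi_y]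
  by (simp add: mom_functional_diff mom_functional_smult algebra_simps)

lemma qbeta_contiguous:
  "qbeta a b (Suc c) d * qq ^ (a + 1)
     = qbeta (Suc a) b c d - (1 - qq ^ (a + 1 + c)) * qbeta a b c d"
proof -
  define S where "S = qpoch qq (a + b + c + d + 1)"
  define Z where "Z = 1 - qq ^ (a + b + c + d + 2)"
  define u where "u = 1 - qq ^ (a + c + 1)"
  define v where "v = 1 - qq ^ (b + c + 1)"
  define w where "w = qq ^ (a + 1) * qq ^ d"
  have S: "S \<noteq> 0" by (simp add: S_def qpoch_qq_ne_0)
  have Z: "Z \<noteq> 0" unfolding Z_def by (rule one_minus_qq_power_ne_0) simp
  have Z_eq: "Z = 1 - w * (1 - v)"
    by (simp add: Z_def w_def v_def flip: power_add)
  have steps: "qpoch qq (a + Suc c) = qpoch qq (a + c) * u"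
    "qpoch qq (b + Suc c) = qpoch qq (b + c) * v"
    "qpoch qq (Suc a + c) = qpoch qq (a + c) * u"
    "qpoch qq (Suc a + d) = qpoch qq (a + d) * (1 - w)"
    "qpoch qq (a + b + Suc c + d + 1) = S * Z"
    "qpoch qq (Suc a + b + c + d + 1) = S * Z"
    by (simp_all add: qpoch_qq_Suc u_def v_def w_def S_def Z_def power_add mult_ac)
  have up: "qbeta a b (Suc c) d = - qbeta a b c d * qq ^ d * u * v / Z"
    and down: "qbeta (Suc a) b c d = qbeta a b c d * u * (1 - w) / Z"
    using S Z unfolding qbeta_def steps S_def[symmetric] by (simp_all add: power_add field_simps)
  have "qbeta a b c d * u * (1 - w) - u * qbeta a b c d * Z
      = - qbeta a b c d * qq ^ d * u * v * qq ^ (a + 1)"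
    by (simp add: Z_eq w_def algebra_simps)
  hence "- qbeta a b c d * qq ^ d * u * v / Z * qq ^ (a + 1)
      = qbeta a b c d * u * (1 - w) / Z - u * qbeta a b c d"
    using Z by (simp add: field_simps)
  moreover have "u = 1 - qq ^ (a + 1 + c)" by (simp add: u_def add_ac)
  ultimately show ?thesis unfolding up down by simp
qed

theorem Psi_y_yweight: "Psi_y (yweight a b c d) = qbeta a b c d"
proof (induction d arbitrary: a b)
  case 0
  show ?case
  proof (induction c arbitrary: a b)
    case 0 show ?case using Psi_y_ypoch_ypoch by (simp add: yweight_def)
  next
    case (Suc c)
    have "Psi_y (yweight a b (Suc c) 0) * qq ^ (a + 1) = qbeta a b (Suc c) 0 * qq ^ (a + 1)"
      unfolding Psi_y_yweight_contiguous qbeta_contiguous Suc.IH ..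
    thus ?case by simp
  qed
next
  case (Suc d)
  have "Psi_y (yweight b a (Suc d) c) * qq ^ (b + 1) = qbeta b a (Suc d) c * qq ^ (b + 1)"
    unfolding Psi_y_yweight_contiguous qbeta_contiguous yweight_swap[of _ _ d c] qbeta_swap[of _ _ d c]
      Suc.IH ..
  thus ?case by (simp add: yweight_swap[of a] qbeta_swap[of a])
qed

section \<open>The q-Chu-Vandermonde sum\<close>

definition qcv_term :: "Qq \<Rightarrow> Qq \<Rightarrow> nat \<Rightarrow> nat \<Rightarrow> Qq" where
  "qcv_term B C n k = qpoch (inverse qq ^ n) k * qpoch B k * qq ^ k / (qpoch qq k * qpoch C k)"

lemma qcv_term_0 [simp]: "qcv_term B C n 0 = 1"
  by (simp add: qcv_term_def)

lemma qcv_term_vanish: "qcv_term B C n (Suc n) = 0"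
  by (simp add: qcv_term_def qpoch_Suc power_inverse)

lemma qpoch_ne_0: "(\<And>m. 1 - qq ^ m * C \<noteq> 0) \<Longrightarrow> qpoch C k \<noteq> 0"
  by (simp add: qpoch_def)

lemma qcv_term_Suc:
  assumes "\<And>m. 1 - qq ^ m * C \<noteq> 0"
  shows "qcv_term B C n (Suc m) = qcv_term B C n m * (1 - inverse qq ^ n * qq ^ m) * (1 - B * qq ^ m) * qq
      / ((1 - qq * qq ^ m) * (1 - C * qq ^ m))"
  using assms[of m] qpoch_ne_0[OF assms, of m] qpoch_qq_ne_0[of m]
  by (simp add: qcv_term_def qpoch_Suc field_simps mult.commute)

lemma qpoch_Suc_shift: "qpoch (z / qq) (Suc k) = (1 - z / qq) * qpoch z k"
proof -
  have "qpoch (z / qq) (Suc k) = (1 - qq ^ 0 * (z / qq)) * (\<Prod>j<k. 1 - qq ^ Suc j * (z / qq))"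
    unfolding qpoch_def by (rule prod.lessThan_Suc_shift)
  also have "(\<Prod>j<k. 1 - qq ^ Suc j * (z / qq)) = qpoch z k"
    unfolding qpoch_def by (rule prod.cong) simp_all
  finally show ?thesis by simp
qed

lemma qcv_term_Suc_Suc:
  assumes "\<And>m. 1 - qq ^ m * C \<noteq> 0"
  shows "qcv_term B C (Suc n) (Suc m) = qcv_term B C n m * (1 - inverse qq ^ n / qq) * (1 - B * qq ^ m) * qq
      / ((1 - qq * qq ^ m) * (1 - C * qq ^ m))"
proof -
  have "inverse qq ^ Suc n = inverse qq ^ n / qq" by (simp add: field_simps)
  hence shift: "qpoch (inverse qq ^ Suc n) (Suc m) = (1 - inverse qq ^ n / qq) * qpoch (inverse qq ^ n) m"
    by (simp only: qpoch_Suc_shift)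
  show ?thesis
    using assms[of m] qpoch_ne_0[OF assms, of m] qpoch_qq_ne_0[of m]
    unfolding qcv_term_def shift by (simp add: qpoch_Suc field_simps mult.commute)
qed

text \<open>An antidifference in k of the contiguous combination below (Zeilberger's certificate).\<close>

definition qcv_antidiff :: "Qq \<Rightarrow> Qq \<Rightarrow> nat \<Rightarrow> nat \<Rightarrow> Qq" where
  "qcv_antidiff B C n k =
     (if k = 0 then 0 else (1 - B * qq ^ (k - 1)) * qcv_term B C n (k - 1) / qq ^ (k - 1))"

lemma qcv_contiguous:
  assumes "\<And>m. 1 - qq ^ m * C \<noteq> 0"
  shows "(1 - C * qq ^ n) * qcv_term B C (Suc n) k - (B - C * qq ^ n) * qcv_term B C n k
       = qcv_antidiff B C n (Suc k) - qcv_antidiff B C n k"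
proof (cases k)
  case 0 thus ?thesis by (simp add: qcv_antidiff_def algebra_simps)
next
  case (Suc m)
  have identity: "(1 - C * w) * t1 - (B - C * w) * t2 = (1 - B * (qq * u)) * t2 / (qq * u) - (1 - B * u) * T / u"
    if "u \<noteq> 0" "D \<noteq> 0" "D = (1 - qq * u) * (1 - C * u)" "z * w = 1"
      "t1 = T * (1 - z / qq) * (1 - B * u) * qq / D" "t2 = T * (1 - z * u) * (1 - B * u) * qq / D"
    for T z u w D t1 t2 :: Qq
  proof -
    have "z \<noteq> 0" using that(4) by auto
    moreover have "w = 1 / z" using that(4) \<open>z \<noteq> 0\<close> by (simp add: field_simps mult.commute)
    moreover have "(1 - C * (1 / z)) * (T * (1 - z / qq) * (1 - B * u) * qq / D)
        - (B - C * (1 / z)) * (T * (1 - z * u) * (1 - B * u) * qq / D)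
      = (1 - B * (qq * u)) * (T * (1 - z * u) * (1 - B * u) * qq / D) / (qq * u) - (1 - B * u) * T / u"
      using that(1,2) \<open>z \<noteq> 0\<close> apply (simp add: field_simps) unfolding that(3) by algebra
    ultimately show ?thesis unfolding that(5,6) by simp
  qed
  have "(1 - qq * qq ^ m) * (1 - C * qq ^ m) \<noteq> 0"
    using assms[of m] by (simp add: mult.commute)
  hence "(1 - C * qq ^ n) * qcv_term B C (Suc n) (Suc m) - (B - C * qq ^ n) * qcv_term B C n (Suc m)
      = (1 - B * (qq * qq ^ m)) * qcv_term B C n (Suc m) / (qq * qq ^ m)
        - (1 - B * qq ^ m) * qcv_term B C n m / qq ^ m"
    by (intro identity[OF _ _ refl _ qcv_term_Suc_Suc[OF assms] qcv_term_Suc[OF assms]])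
       (simp_all add: power_inverse)
  thus ?thesis using Suc by (simp add: qcv_antidiff_def)
qed

theorem q_Chu_Vandermonde:
  assumes "\<And>m. 1 - qq ^ m * C \<noteq> 0"
  shows "(\<Sum>k\<le>n. qcv_term B C n k) = (\<Prod>i<n. B - C * qq ^ i) / qpoch C n"
proof (induction n)
  case 0 thus ?case by simp
next
  case (Suc n)
  have "(\<Sum>k\<le>Suc n. (1 - C * qq ^ n) * qcv_term B C (Suc n) k - (B - C * qq ^ n) * qcv_term B C n k)
      = (\<Sum>k<Suc (Suc n). qcv_antidiff B C n (Suc k) - qcv_antidiff B C n k)"
    by (simp only: qcv_contiguous[OF assms] lessThan_Suc_atMost)
  also have "\<dots> = qcv_antidiff B C n (Suc (Suc n)) - qcv_antidiff B C n 0"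
    by (rule sum_lessThan_telescope)
  also have "\<dots> = 0" by (simp add: qcv_antidiff_def qcv_term_vanish)
  finally have "(\<Sum>k\<le>Suc n. (1 - C * qq ^ n) * qcv_term B C (Suc n) k)
      = (\<Sum>k\<le>Suc n. (B - C * qq ^ n) * qcv_term B C n k)"
    unfolding sum_subtractf by simp
  hence "(1 - C * qq ^ n) * (\<Sum>k\<le>Suc n. qcv_term B C (Suc n) k)
      = (B - C * qq ^ n) * (\<Sum>k\<le>Suc n. qcv_term B C n k)"
    by (simp only: sum_distrib_left)
  also have "(\<Sum>k\<le>Suc n. qcv_term B C n k) = (\<Sum>k\<le>n. qcv_term B C n k)"
    by (simp add: qcv_term_vanish)
  finally show ?case
    using assms[of n] qpoch_ne_0[OF assms, of n] unfolding Suc.IH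
    by (simp add: qpoch_Suc field_simps mult.commute)
qed

section \<open>Back to the variable x\<close>

lemma ypoch_0_yvar: "pcompose (ypoch 0 k) yvar = smult ((1 - qq) ^ k) (Asc k)"
proof (induction k)
  case 0 thus ?case by (simp add: Asc_def pcompose_1)
next
  case (Suc k)
  have factor: "pcompose [:1, - (qq ^ (k + 1)):] yvar = smult (1 - qq) [:qint (Suc k), qq ^ Suc k:]"
    by (simp add: yvar_def pcompose_pCons qint_def field_simps)
  have "Asc (Suc k) = Asc k * [:qint (Suc k), qq ^ Suc k:]"
    by (simp add: Asc_def)
  thus ?case
    by (simp only: ypoch_0_Suc pcompose_mult Suc factor) (rule poly_ext, simp add: algebra_simps)
qed

lemma Desc_Suc: "Desc (Suc n) = Desc n * [:qint (Suc n), -1:]"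
  unfolding Desc_def by (intro poly_ext) (simp add: poly_prod atLeastAtMostSuc_conv mult.commute)

lemma xDesc_Suc: "c \<noteq> 0 \<Longrightarrow> xDesc (Suc c) = xDesc c * [:qint c, -1:]"
  by (cases c) (simp_all add: xDesc_def Desc_Suc mult.assoc)

lemma ydesc_yvar: "pcompose (ydesc c) yvar = smult (- ((qq - 1) ^ c)) (xDesc c)"
proof (induction c)
  case 0 thus ?case by (simp add: xDesc_def pcompose_1)
next
  case (Suc c)
  show ?case
  proof (cases "c = 0")
    case True thus ?thesis by (simp add: ydesc_def xDesc_def Desc_def yvar_def pcompose_pCons)
  next
    case False
    have factor: "pcompose [:qq ^ c, -1:] yvar = smult (qq - 1) [:qint c, -1:]"
      by (simp add: yvar_def pcompose_pCons qint_def field_simps)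
    show ?thesis
      by (simp only: ydesc_Suc pcompose_mult factor xDesc_Suc[OF False] Suc.IH)
         (rule poly_ext, simp add: algebra_simps)
  qed
qed

definition yweight_scale :: "nat \<Rightarrow> nat \<Rightarrow> nat \<Rightarrow> nat \<Rightarrow> Qq" where
  "yweight_scale a b c d = (1 - qq) ^ (a + b) * (qq - 1) ^ (c + d)"

lemma yweight_scale_ne_0: "yweight_scale a b c d \<noteq> 0"
  by (simp add: yweight_scale_def)

lemma yweight_yvar: "pcompose (yweight a b c d) yvar = smult (yweight_scale a b c d) (x2W (Suc a) (Suc b) c d)"
  by (simp add: yweight_def x2W_def pcompose_mult ypoch_0_yvar ydesc_yvar yweight_scale_def power_add mult_ac)

definition Ly :: "nat \<Rightarrow> nat \<Rightarrow> nat \<Rightarrow> nat \<Rightarrow> Qq poly \<Rightarrow> Qq" where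
  "Ly a b c d f = Psi_y (f * yweight a b c d) / qbeta a b c d"

lemma moments_pcompose_yvar:
  "mom_functional (\<lambda>n. Psi ([:0, 1:] ^ n * x2W (Suc a) (Suc b) c d) / Psi (x2W (Suc a) (Suc b) c d))
     (pcompose p yvar) = Ly a b c d p"
proof -
  define K where "K = yweight_scale a b c d"
  have K: "K \<noteq> 0" by (simp add: K_def yweight_scale_ne_0)
  have x2W: "x2W (Suc a) (Suc b) c d = smult (inverse K) (pcompose (yweight a b c d) yvar)"
    using K by (simp add: yweight_yvar K_def)
  have "Psi (pcompose p yvar * x2W (Suc a) (Suc b) c d) = inverse K * Psi_y (p * yweight a b c d)"
    by (simp add: x2W Psi_eq_mom_functional mom_functional_smult Psi_pcompose_yvar[unfolded Psi_eq_mom_functional]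
        flip: pcompose_mult)
  moreover have "Psi (x2W (Suc a) (Suc b) c d) = inverse K * qbeta a b c d"
    by (simp add: x2W Psi_eq_mom_functional mom_functional_smult Psi_pcompose_yvar[unfolded Psi_eq_mom_functional]
        Psi_y_yweight)
  ultimately show ?thesis
    using K by (simp add: Psi_eq_mom_functional mom_functional_mult_weight Ly_def)
qed

section \<open>Orthogonality\<close>

definition Py_coeff :: "nat \<Rightarrow> nat \<Rightarrow> nat \<Rightarrow> nat \<Rightarrow> nat \<Rightarrow> nat \<Rightarrow> Qq" where
  "Py_coeff a b c d n k = qpoch (inverse qq ^ n) k * qpoch (qq ^ (n + a + b + c + d + 1)) k * qq ^ k
      / (qpoch qq k * qpoch (qq ^ (a + c + 1)) k * qpoch (qq ^ (a + d + 1)) k)"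

definition Py :: "nat \<Rightarrow> nat \<Rightarrow> nat \<Rightarrow> nat \<Rightarrow> nat \<Rightarrow> Qq poly" where
  "Py a b c d n = (\<Sum>k\<le>n. smult (Py_coeff a b c d n k) (ypoch a k))"

lemma qpoch_poly_yvar:
  "qpoch_poly [:qq ^ Suc a, qq ^ Suc a * (qq - 1):] k = pcompose (ypoch a k) yvar"
proof -
  have "1 - smult (qq ^ j) [:qq ^ Suc a, qq ^ Suc a * (qq - 1):]
      = pcompose [:1, - (qq ^ (a + j + 1)):] yvar" for j
    by (simp add: yvar_def pcompose_pCons power_add algebra_simps)
  thus ?thesis by (simp add: qpoch_poly_def ypoch_def pcompose_prod)
qed

lemma Pn_eq_pcompose_Py: "Pn (Suc a) (Suc b) c d n = pcompose (Py a b c d n) yvar"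
proof -
  have "n + Suc a + Suc b + c + d - 1 = n + a + b + c + d + 1" "Suc a + c = a + c + 1"
    "Suc a + d = a + d + 1" by simp_all
  thus ?thesis
    unfolding Pn_def Py_def Py_coeff_def qpoch_poly_yvar by (simp add: pcompose_sum pcompose_smult)
qed

lemma degree_ypoch: "degree (ypoch s k) = k"
  unfolding ypoch_def by (subst degree_prod_sum_eq) auto

lemma lead_coeff_ypoch_ne_0: "coeff (ypoch s k) k \<noteq> 0"
proof -
  have "lead_coeff (ypoch s k) = (\<Prod>j<k. - (qq ^ (s + j + 1)))"
    unfolding ypoch_def lead_coeff_prod by simp
  thus ?thesis by (simp add: degree_ypoch)
qed

lemma qpoch_inverse_power_ne_0: "qpoch (inverse qq ^ n) n \<noteq> 0"
proof -
  have "1 - qq ^ j * inverse qq ^ n \<noteq> 0" if "j < n" for j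
  proof -
    have "qq ^ j * inverse qq ^ n = inverse (qq ^ (n - j))"
      using that by (simp add: power_inverse field_simps flip: power_add)
    moreover have "qq ^ (n - j) \<noteq> 1" using that by simp
    ultimately show ?thesis by (simp add: inverse_eq_divide field_simps)
  qed
  thus ?thesis unfolding qpoch_def by (simp add: prod_zero_iff)
qed

lemma Py_coeff_top_ne_0: "Py_coeff a b c d n n \<noteq> 0"
  using qpoch_qq_power_ne_0[of "n + a + b + c + d + 1" n] qpoch_qq_power_ne_0[of "a + c + 1" n]
    qpoch_qq_power_ne_0[of "a + d + 1" n]
  by (simp add: Py_coeff_def qpoch_inverse_power_ne_0 qpoch_qq_ne_0)

lemma coeff_Py_top: "coeff (Py a b c d n) n = Py_coeff a b c d n n * coeff (ypoch a n) n"
proof -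
  have "coeff (Py a b c d n) n = (\<Sum>k\<le>n. Py_coeff a b c d n k * coeff (ypoch a k) n)"
    by (simp add: Py_def coeff_sum)
  also have "\<dots> = (\<Sum>k\<in>{n}. Py_coeff a b c d n k * coeff (ypoch a k) n)"
    by (rule sum.mono_neutral_right) (auto simp: coeff_eq_0 degree_ypoch)
  finally show ?thesis by simp
qed

lemma coeff_Py_top_ne_0: "coeff (Py a b c d n) n \<noteq> 0"
  by (simp add: coeff_Py_top Py_coeff_top_ne_0 lead_coeff_ypoch_ne_0)

lemma degree_Py: "degree (Py a b c d n) = n"
proof -
  have "degree (Py a b c d n) \<le> n"
    unfolding Py_def by (rule degree_sum_le) (auto simp: degree_ypoch intro: order.trans[OF degree_smult_le])
  thus ?thesis using coeff_Py_top_ne_0 by (metis le_antisym le_degree)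
qed

lemma Py_ne_0: "Py a b c d n \<noteq> 0"
  using coeff_Py_top_ne_0[of a b c d n] by auto

lemma yweight_mult_ypoch: "yweight a b c d * (ypoch a k * ypoch b j) = yweight (a + k) (b + j) c d"
proof -
  have "yweight a b c d * (ypoch a k * ypoch b j)
      = (ypoch 0 a * ypoch (0 + a) k) * (ypoch 0 b * ypoch (0 + b) j) * ydesc c * ydesc d"
    by (simp add: yweight_def mult_ac)
  thus ?thesis by (simp only: ypoch_add yweight_def)
qed

lemma Ly_add: "Ly a b c d (f + g) = Ly a b c d f + Ly a b c d g"
  by (simp add: Ly_def distrib_right mom_functional_add add_divide_distrib)

lemma Ly_smult: "Ly a b c d (smult r f) = r * Ly a b c d f"
  by (simp add: Ly_def mom_functional_smult)

lemma Ly_Py_mult_ypoch: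
  "Ly a b c d (Py a b c d n * ypoch b j)
     = (\<Sum>k\<le>n. Py_coeff a b c d n k * qbeta (a + k) (b + j) c d) / qbeta a b c d"
proof -
  have "Py a b c d n * ypoch b j * yweight a b c d
      = (\<Sum>k\<le>n. smult (Py_coeff a b c d n k) (yweight (a + k) (b + j) c d))"
    unfolding Py_def sum_distrib_right
    by (rule sum.cong) (simp_all flip: yweight_mult_ypoch add: mult_ac)
  thus ?thesis by (simp add: Ly_def mom_functional_sum mom_functional_smult Psi_y_yweight)
qed

text \<open>The k-independent factor of the summands above; what remains is a q-Chu-Vandermonde
  term.\<close>

definition pairing_factor :: "nat \<Rightarrow> nat \<Rightarrow> nat \<Rightarrow> nat \<Rightarrow> nat \<Rightarrow> Qq" where
  "pairing_factor a b c d j = (-1) ^ (c + d) * (1 - qq) * qq ^ (c * d)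
     * qpoch qq (a + c) * qpoch qq (a + d) * qpoch qq (b + c + j) * qpoch qq (b + d + j)
     / qpoch qq (a + b + c + d + j + 1)"

lemma pairing_factor_ne_0: "pairing_factor a b c d j \<noteq> 0"
  by (simp add: pairing_factor_def qpoch_qq_ne_0)

lemma Py_coeff_mult_qbeta:
  "Py_coeff a b c d n k * qbeta (a + k) (b + j) c d
   = pairing_factor a b c d j * qcv_term (qq ^ (n + a + b + c + d + 1)) (qq ^ (a + b + c + d + j + 2)) n k"
proof -
  have "qpoch qq (a + k + c) = qpoch qq (a + c) * qpoch (qq ^ (a + c + 1)) k"
    and "qpoch qq (a + k + d) = qpoch qq (a + d) * qpoch (qq ^ (a + d + 1)) k"
    and "qpoch qq (a + k + (b + j) + c + d + 1)
      = qpoch qq (a + b + c + d + j + 1) * qpoch (qq ^ (a + b + c + d + j + 2)) k"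
    using qpoch_qq_add[of "a + c" k] qpoch_qq_add[of "a + d" k]
      qpoch_qq_add[of "a + b + c + d + j + 1" k]
    by (simp_all add: add_ac)
  moreover have "qpoch (qq ^ (a + c + 1)) k \<noteq> 0" "qpoch (qq ^ (a + d + 1)) k \<noteq> 0"
    "qpoch (qq ^ (a + b + c + d + j + 2)) k \<noteq> 0"
    by (rule qpoch_qq_power_ne_0, simp)+
  ultimately show ?thesis
    using qpoch_qq_ne_0 unfolding qbeta_def Py_coeff_def qcv_term_def pairing_factor_def
    by (simp add: field_simps add_ac)
qed

lemma Ly_Py_mult_ypoch_eq:
  "Ly a b c d (Py a b c d n * ypoch b j) = pairing_factor a b c d j
     * ((\<Prod>i<n. qq ^ (n + a + b + c + d + 1) - qq ^ (a + b + c + d + j + 2) * qq ^ i)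
         / qpoch (qq ^ (a + b + c + d + j + 2)) n)
     / qbeta a b c d"
proof -
  have C: "1 - qq ^ m * qq ^ (a + b + c + d + j + 2) \<noteq> 0" for m
    using one_minus_qq_power_ne_0[of "m + (a + b + c + d + j + 2)"] by (simp only: power_add) simp
  show ?thesis
    unfolding Ly_Py_mult_ypoch Py_coeff_mult_qbeta sum_distrib_left[symmetric] q_Chu_Vandermonde[OF C] ..
qed

lemma Ly_Py_mult_ypoch_eq_0: "j < n \<Longrightarrow> Ly a b c d (Py a b c d n * ypoch b j) = 0"
proof -
  assume "j < n"
  hence "a + b + c + d + j + 2 + (n - 1 - j) = n + a + b + c + d + 1" by simp
  hence "qq ^ (n + a + b + c + d + 1) - qq ^ (a + b + c + d + j + 2) * qq ^ (n - 1 - j) = 0"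
    by (simp only: power_add[symmetric])
  moreover have "n - 1 - j < n" using \<open>j < n\<close> by simp
  ultimately have "(\<Prod>i<n. qq ^ (n + a + b + c + d + 1) - qq ^ (a + b + c + d + j + 2) * qq ^ i) = 0"
    by (auto intro: prod_zero)
  thus ?thesis unfolding Ly_Py_mult_ypoch_eq by simp
qed

lemma Ly_Py_mult_ypoch_ne_0: "Ly a b c d (Py a b c d n * ypoch b n) \<noteq> 0"
proof -
  have "qq ^ (n + a + b + c + d + 1) - qq ^ (a + b + c + d + n + 2) * qq ^ i \<noteq> 0" for i
    by (simp only: power_add[symmetric] right_minus_eq qq_power_eq_iff)
  hence "(\<Prod>i<n. qq ^ (n + a + b + c + d + 1) - qq ^ (a + b + c + d + n + 2) * qq ^ i) \<noteq> 0"
    by (simp only: prod_zero_iff[OF finite_lessThan]) blast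
  moreover have "qpoch (qq ^ (a + b + c + d + n + 2)) n \<noteq> 0"
    by (rule qpoch_qq_power_ne_0) simp
  ultimately show ?thesis
    unfolding Ly_Py_mult_ypoch_eq using pairing_factor_ne_0 qbeta_ne_0 by simp
qed

lemma Ly_Py_mult_eq_0: "degree f < n \<Longrightarrow> Ly a b c d (Py a b c d n * f) = 0"
proof (induction "degree f" arbitrary: f rule: less_induct)
  case less
  define r where "r = coeff f (degree f) / coeff (ypoch b (degree f)) (degree f)"
  define g where "g = f - smult r (ypoch b (degree f))"
  have "Py a b c d n * f = Py a b c d n * g + smult r (Py a b c d n * ypoch b (degree f))"
    by (simp add: g_def algebra_simps)
  moreover have "Ly a b c d (Py a b c d n * g) = 0"
  proof (cases "degree f = 0")
    case True
    hence "g = 0" by (auto simp: g_def r_def elim!: degree_eq_zeroE)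
    thus ?thesis by (simp add: Ly_def)
  next
    case False
    have "degree g \<le> degree f" unfolding g_def
      by (rule degree_diff_le) (auto simp: degree_ypoch)
    moreover have "coeff g (degree f) = 0"
      using lead_coeff_ypoch_ne_0[of b "degree f"] by (simp add: g_def r_def)
    ultimately have "degree g < degree f"
      using False by (metis degree_less_if_less_eqI gr0I degree_0)
    thus ?thesis using less by simp
  qed
  ultimately show ?case
    using Ly_Py_mult_ypoch_eq_0[OF less.prems] by (simp add: Ly_add Ly_smult)
qed

lemma Ly_Py_orthogonal: "i \<noteq> j \<Longrightarrow> Ly a b c d (Py a b c d i * Py a b c d j) = 0"
proof (cases "j < i")
  case True thus ?thesis by (simp add: Ly_Py_mult_eq_0 degree_Py)
next
  case False
  moreover assume "i \<noteq> j"
  ultimately have "Ly a b c d (Py a b c d j * Py a b c d i) = 0" by (simp add: Ly_Py_mult_eq_0 degree_Py)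
  thus ?thesis by (simp add: mult.commute)
qed

lemma Ly_Py_square_ne_0: "Ly a b c d (Py a b c d n * Py a b c d n) \<noteq> 0"
proof -
  define r where "r = coeff (Py a b c d n) n / coeff (ypoch b n) n"
  define g where "g = Py a b c d n - smult r (ypoch b n)"
  have "r \<noteq> 0" by (simp add: r_def coeff_Py_top_ne_0 lead_coeff_ypoch_ne_0)
  have "coeff g i = 0" if "n \<le> i" for i
    using that lead_coeff_ypoch_ne_0[of b n]
    by (cases "i = n") (simp_all add: g_def r_def coeff_eq_0 degree_ypoch degree_Py)
  hence "g = 0 \<or> degree g < n"
    by (metis leading_coeff_0_iff linorder_not_le)
  hence "Ly a b c d (Py a b c d n * g) = 0"
    by (elim disjE) (simp add: Ly_def, simp add: Ly_Py_mult_eq_0)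
  moreover have "Py a b c d n * Py a b c d n = Py a b c d n * g + smult r (Py a b c d n * ypoch b n)"
    by (simp add: g_def algebra_simps)
  ultimately show ?thesis
    using Ly_Py_mult_ypoch_ne_0 \<open>r \<noteq> 0\<close> by (simp add: Ly_add Ly_smult)
qed

theorem mainTheorem12:
  fixes a b c d :: nat
  assumes "a \<ge> 1" and "b \<ge> 1"
  shows "is_moments_of
           (\<lambda>n. Psi ([:0, 1:] ^ n * x2W a b c d) / Psi (x2W a b c d))
           (Pn a b c d)"
proof -
  obtain a' b' where a: "a = Suc a'" and b: "b = Suc b'"
    using assms by (metis Suc_pred' less_eq_Suc_le One_nat_def)
  define m where "m = (\<lambda>n. Psi ([:0, 1:] ^ n * x2W a b c d) / Psi (x2W a b c d))"
  have pairing: "mom_functional m (Pn a b c d i * Pn a b c d j) = Ly a' b' c d (Py a' b' c d i * Py a' b' c d j)"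
    for i j unfolding m_def a b Pn_eq_pcompose_Py pcompose_mult[symmetric] moments_pcompose_yvar ..
  have "m 0 = mom_functional m (pcompose 1 yvar)"
    by (simp add: pcompose_1 mom_functional_1)
  also have "\<dots> = Ly a' b' c d 1"
    unfolding m_def a b moments_pcompose_yvar ..
  finally have "m 0 = 1" by (simp add: Ly_def Psi_y_yweight qbeta_ne_0)
  moreover have "degree (Pn a b c d n) = n" "Pn a b c d n \<noteq> 0" for n
    by (simp_all add: a b Pn_eq_pcompose_Py degree_pcompose yvar_def degree_Py Py_ne_0 pcompose_eq_0_iff)
  ultimately show ?thesis
    unfolding is_moments_of_def m_def[symmetric] pairing
    using Ly_Py_orthogonal Ly_Py_square_ne_0 by blast
qed

end
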